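(* Let $n_q\ge 1$ and let $u:\{1,\dots,n_q\}\times\{1,\dots,n_q\}\to\mathbb{R}$ be such that for every item $i$, $u(i,\cdot)$ is monotonically decreasing in the position argument. Let $s_1,\dots,s_{n_q}$ be pairwise distinct real scores and let $k_i\in\{1,\dots,n_q\}$ be the position of item $i$ when items are sorted by score in descending order (so $k_i = 1+|\{j: s_j>s_i\}|$). Let $k^*=(k^*_1,\dots,k^*_{n_q})$ be a permutation of $\{1,\dots,n_q\}$ maximizing $\sum_{i=1}^{n_q} u(i,k^*_i)$. Define $$\mathcal{L}_r = \sum_{i=1}^{n_q} u(i,k_i^* ) - \sum_{i=1}^{n_q} u(i,k_i), \qquad \mathcal{L}''_r = \sum_{i=1}^{n_q}\sum_{j:\,s_i<s_j} \left|u(i,k_j)-u(i,k_i)\right|.$$ Then $\mathcal{L}_r \le \mathcal{L}''_r$.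
   Context: In the intended application, $u(i,k)=c_{i,k_i^h}\cdot \frac{P(c_{i,k}=1)}{P(c_{i,k_i^h}=1)}\cdot b_i$ is the (debiased) utility of displaying item $i$ at position $k$ ($k_i^h$ the logged position, $c_{i,k_i^h}$ the observed click, $b_i$ the item's utility value), $s_i=\Phi(f_i,b_i)$ are scores of a scoring function $\Phi$, and $k^*$ is the optimal (maximum-weight matching) assignment of items to positions; $\mathcal{L}_r$ is the utility regret of the ranking induced by the scores. *)

theory Defs
  imports Main "HOL.Real"
begin

definition rank_pos :: "nat \<Rightarrow> (nat \<Rightarrow> real) \<Rightarrow> nat \<Rightarrow> nat" where
  "rank_pos n s i = 1 + card {j \<in> {1..n}. s j > s i}"

end

theory Submission
  imports Defs
begin

text \<open>The bound holds item by item. Since \<open>u(i,\<cdot>)\<close> is decreasing, no position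
earns item \<open>i\<close> more than position 1. If \<open>i\<close> has the top score, it sits at position 1
and its regret is \<open>\<le> 0\<close>. Otherwise the top-scored item \<open>j\<^sub>0\<close> sits at position 1 and
beats \<open>i\<close>, so the regret of \<open>i\<close> is bounded by the single summand
\<open>|u(i,1) - u(i,k\<^sub>i)|\<close> of the pairwise loss.\<close>

lemma finite_obtains_argmax:
  fixes s :: "'a \<Rightarrow> 'b::linorder"
  assumes "finite A" "A \<noteq> {}"
  obtains j where "j \<in> A" "\<And>k. k \<in> A \<Longrightarrow> s k \<le> s j"
proof -
  have "Max (s ` A) \<in> s ` A"
    using assms by simp
  then obtain j where "j \<in> A" "s j = Max (s ` A)"
    by (metis imageE)
  with assms show thesis
    using that by simp
qed

lemma rank_pos_eq_1:
  assumes "\<And>j. j \<in> {1..n} \<Longrightarrow> s j \<le> s i"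
  shows "rank_pos n s i = 1"
  using assms unfolding rank_pos_def by (auto simp: not_less)

lemma item_regret_le_pairwise_loss:
  fixes f :: "nat \<Rightarrow> real"
  assumes f_antimono: "antimono_on {1..n} f"
    and p: "p \<in> {1..n}"
  shows "f p - f (rank_pos n s i)
         \<le> (\<Sum>j\<in>{j \<in> {1..n}. s i < s j}. \<bar>f (rank_pos n s j) - f (rank_pos n s i)\<bar>)"
proof -
  obtain j0 where j0: "j0 \<in> {1..n}" and top: "\<And>j. j \<in> {1..n} \<Longrightarrow> s j \<le> s j0"
    using p finite_obtains_argmax[of "{1..n}" s] by blast
  have "f p \<le> f 1"
    using p by (intro monotone_onD[OF f_antimono]) auto
  show ?thesis
  proof (cases "s i < s j0")
    case True
    have "f p - f (rank_pos n s i) \<le> \<bar>f (rank_pos n s j0) - f (rank_pos n s i)\<bar>"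
      using \<open>f p \<le> f 1\<close> rank_pos_eq_1[of n s j0, OF top] by simp
    also have "\<dots> \<le> (\<Sum>j\<in>{j \<in> {1..n}. s i < s j}. \<bar>f (rank_pos n s j) - f (rank_pos n s i)\<bar>)"
      using True j0 by (intro member_le_sum) auto
    finally show ?thesis .
  next
    case False
    then have "rank_pos n s i = 1"
      using top by (intro rank_pos_eq_1) (meson order.trans not_less)
    then have "f p - f (rank_pos n s i) \<le> 0"
      using \<open>f p \<le> f 1\<close> by simp
    also have "0 \<le> (\<Sum>j\<in>{j \<in> {1..n}. s i < s j}. \<bar>f (rank_pos n s j) - f (rank_pos n s i)\<bar>)"
      by (intro sum_nonneg) simp
    finally show ?thesis .
  qed
qed

theorem theorem2:
  fixes n :: nat and u :: "nat \<Rightarrow> nat \<Rightarrow> real" and s :: "nat \<Rightarrow> real"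
    and kstar :: "nat \<Rightarrow> nat"
  assumes n_pos: "n \<ge> 1"
    and u_mono: "\<And>i p q. i \<in> {1..n} \<Longrightarrow> p \<in> {1..n} \<Longrightarrow> q \<in> {1..n} \<Longrightarrow> p \<le> q \<Longrightarrow> u i q \<le> u i p"
    and s_distinct: "inj_on s {1..n}"
    and kstar_perm: "bij_betw kstar {1..n} {1..n}"
    and kstar_opt: "\<And>\<sigma>. bij_betw \<sigma> {1..n} {1..n} \<Longrightarrow>
                      (\<Sum>i\<in>{1..n}. u i (\<sigma> i)) \<le> (\<Sum>i\<in>{1..n}. u i (kstar i))"
  shows "(\<Sum>i\<in>{1..n}. u i (kstar i)) - (\<Sum>i\<in>{1..n}. u i (rank_pos n s i))
         \<le> (\<Sum>i\<in>{1..n}. \<Sum>j\<in>{j \<in> {1..n}. s i < s j}. \<bar>u i (rank_pos n s j) - u i (rank_pos n s i)\<bar>)"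
proof -
  have "u i (kstar i) - u i (rank_pos n s i)
        \<le> (\<Sum>j\<in>{j \<in> {1..n}. s i < s j}. \<bar>u i (rank_pos n s j) - u i (rank_pos n s i)\<bar>)"
    if i: "i \<in> {1..n}" for i
  proof (rule item_regret_le_pairwise_loss)
    show "antimono_on {1..n} (u i)"
      using u_mono[OF i] by (intro monotone_onI) auto
    show "kstar i \<in> {1..n}"
      using kstar_perm i by (auto dest: bij_betw_apply)
  qed
  then show ?thesis
    unfolding sum_subtractf[symmetric] by (intro sum_mono)
qed

end
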